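(* Let $(X,G)$ be a minimal topological dynamical system. The set $\mathcal V=\{F\in 2^X: V(F)=\pi_{eq}(F)\}$ is a compact $G$-invariant subset of $2^X$.
   Context: $G$ is an infinite countable discrete group; a tds $(X,G)$ is a compact metric space with a $G$-action by homeomorphisms; minimal means no proper nonempty closed invariant subset. $\pi_{eq}:X\to X_{eq}$ is the factor map onto the maximal equicontinuous factor, $\nu_{eq}$ the unique invariant probability measure of $(X_{eq},G)$. $2^X$ is the space of nonempty closed subsets with the Hausdorff metric $d_H$, with action $gA=\{ga:a\in A\}$. $\mathcal X=\overline{\{\pi_{eq}^{-1}(y):y\in X_{eq}\}}\subset 2^X$; for $E\in\mathcal X$, $\pi_{\mathcal X}(E)$ is the single point $\pi_{eq}(E)$. $\mathcal X_{eq}^{\mathrm{meas}}=\{E\in\mathcal X:\nu_{eq}(\pi_{\mathcal X}(B^{\mathcal X}_\epsilon(E)))>0\ \forall\epsilon>0\}$, $B^{\mathcal X}_\epsilon(E)$ the open $d_H$-ball in $\mathcal X$. For $F\in 2^X$, $V(F)=\{y\in X_{eq}:\exists E\in\mathcal X_{eq}^{\mathrm{meas}}, E\subset F,\ \pi_{\mathcal X}(E)=y\}$. *)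

theory Defs
  imports "HOL-Analysis.Analysis" "HOL-Probability.Probability"
begin

text \<open>A group G (a type of class group_add, written additively, not necessarily abelian)
acts on a compact metric space X (a compact subset of a metric space type) by homeomorphisms.\<close>

definition tds :: "'a::metric_space set \<Rightarrow> ('g::group_add \<Rightarrow> 'a \<Rightarrow> 'a) \<Rightarrow> bool" where
  "tds X act \<longleftrightarrow> compact X \<and>
     (\<forall>g. continuous_on X (act g) \<and> act g ` X \<subseteq> X) \<and>
     (\<forall>x\<in>X. act 0 x = x) \<and>
     (\<forall>g h. \<forall>x\<in>X. act (g + h) x = act g (act h x))"

definition minimal_tds :: "'a::metric_space set \<Rightarrow> ('g::group_add \<Rightarrow> 'a \<Rightarrow> 'a) \<Rightarrow> bool" where
  "minimal_tds X act \<longleftrightarrow> tds X act \<and> X \<noteq> {} \<and>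
     (\<forall>A. A \<subseteq> X \<and> closed A \<and> A \<noteq> {} \<and> (\<forall>g. act g ` A \<subseteq> A) \<longrightarrow> A = X)"

definition equicontinuous_tds :: "'a::metric_space set \<Rightarrow> ('g \<Rightarrow> 'a \<Rightarrow> 'a) \<Rightarrow> bool" where
  "equicontinuous_tds X act \<longleftrightarrow>
     (\<forall>e>0. \<exists>d>0. \<forall>x\<in>X. \<forall>y\<in>X. dist x y < d \<longrightarrow> (\<forall>g. dist (act g x) (act g y) < e))"

definition factor_map ::
  "'a::metric_space set \<Rightarrow> ('g \<Rightarrow> 'a \<Rightarrow> 'a) \<Rightarrow> 'b::metric_space set \<Rightarrow> ('g \<Rightarrow> 'b \<Rightarrow> 'b)
     \<Rightarrow> ('a \<Rightarrow> 'b) \<Rightarrow> bool" where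
  "factor_map X actX Y actY p \<longleftrightarrow> continuous_on X p \<and> p ` X = Y \<and>
     (\<forall>g. \<forall>x\<in>X. p (actX g x) = actY g (p x))"

text \<open>Test factors range over compact subsets of the
Hilbert-cube-like space nat => real (product metric), which contains a homeomorphic copy of
every compact metric space; equicontinuity of a compact system does not depend on the
compatible metric.\<close>

definition max_eq_factor ::
  "'a::metric_space set \<Rightarrow> ('g::group_add \<Rightarrow> 'a \<Rightarrow> 'a) \<Rightarrow> 'b::metric_space set \<Rightarrow> ('g \<Rightarrow> 'b \<Rightarrow> 'b)
     \<Rightarrow> ('a \<Rightarrow> 'b) \<Rightarrow> bool" where
  "max_eq_factor X act Y actY p \<longleftrightarrow>
     tds Y actY \<and> equicontinuous_tds Y actY \<and> factor_map X act Y actY p \<and>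
     (\<forall>(Z :: (nat \<Rightarrow> real) set) actZ q.
        tds Z actZ \<and> equicontinuous_tds Z actZ \<and> factor_map X act Z actZ q \<longrightarrow>
        (\<exists>r. factor_map Y actY Z actZ r \<and> (\<forall>x\<in>X. q x = r (p x))))"

definition invariant_prob :: "'b::metric_space set \<Rightarrow> ('g \<Rightarrow> 'b \<Rightarrow> 'b) \<Rightarrow> 'b measure \<Rightarrow> bool" where
  "invariant_prob Y actY \<nu> \<longleftrightarrow> prob_space \<nu> \<and> sets \<nu> = sets (restrict_space borel Y) \<and>
     (\<forall>g. \<forall>A\<in>sets \<nu>. emeasure \<nu> (actY g -` A \<inter> Y) = emeasure \<nu> A)"

definition hausdorff_dist :: "'a::metric_space set \<Rightarrow> 'a set \<Rightarrow> real" where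
  "hausdorff_dist A B =
     (if A \<noteq> {} \<and> B \<noteq> {} \<and> bounded A \<and> bounded B
      then max (SUP a\<in>A. infdist a B) (SUP b\<in>B. infdist b A) else 0)"

definition hyperspace :: "'a::metric_space set \<Rightarrow> 'a set set" where
  "hyperspace X = {A. A \<subseteq> X \<and> closed A \<and> A \<noteq> {}}"

abbreviation hyper_top :: "'a::metric_space set \<Rightarrow> 'a set topology" where
  "hyper_top X \<equiv> Metric_space.mtopology (hyperspace X) hausdorff_dist"

definition fibre_closure :: "'a::metric_space set \<Rightarrow> ('a \<Rightarrow> 'b) \<Rightarrow> 'b set \<Rightarrow> 'a set set" where
  "fibre_closure X p Y = hyper_top X closure_of {p -` {y} \<inter> X | y. y \<in> Y}"

definition pi_X :: "('a \<Rightarrow> 'b) \<Rightarrow> 'a set \<Rightarrow> 'b" where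
  "pi_X p E = the_elem (p ` E)"

definition fibre_meas ::
  "'a::metric_space set \<Rightarrow> ('a \<Rightarrow> 'b) \<Rightarrow> 'b set \<Rightarrow> 'b measure \<Rightarrow> 'a set set" where
  "fibre_meas X p Y \<nu> = {E \<in> fibre_closure X p Y. \<forall>e>0.
      measure \<nu> (pi_X p ` (Metric_space.mball (fibre_closure X p Y) hausdorff_dist E e)) > 0}"

definition Vset ::
  "'a::metric_space set \<Rightarrow> ('a \<Rightarrow> 'b) \<Rightarrow> 'b set \<Rightarrow> 'b measure \<Rightarrow> 'a set \<Rightarrow> 'b set" where
  "Vset X p Y \<nu> F = {y \<in> Y. \<exists>E\<in>fibre_meas X p Y \<nu>. E \<subseteq> F \<and> pi_X p E = y}"

end

theory Submission
  imports Defs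
begin

(* The hyperspace 2^X of nonempty closed subsets of the compact space X is compact for the
   Hausdorff metric, so it suffices to show that V is closed and G-invariant.

   Closedness: let F_k -> F with F_k in V and x in F. Approximate x by points x_k in F_k and choose
   E_k in X_meas with E_k <= F_k and pi(E_k) = p(x_k). A limit point E of the E_k lies in X_meas,
   which is closed because positivity of the measures of the pi-images of balls passes to limits
   by the triangle inequality; moreover E <= F, and pi(E) = p(x) since pi is continuous on the
   closure of the fibres. Hence p(x) is in V(F).

   Invariance: each g acts uniformly continuously on 2^X and maps fibres onto fibres, so it
   preserves the closure of the fibres; since pi(gE) = g pi(E) and nu is invariant, it also
   preserves X_meas, and therefore V. *)

section \<open>Hausdorff distance between compact sets\<close>

lemma bdd_above_infdist_image:
  fixes A B :: "'a::metric_space set"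
  assumes "bounded A" "B \<noteq> {}"
  shows "bdd_above ((\<lambda>a. infdist a B) ` A)"
proof -
  obtain b where b: "b \<in> B" using assms(2) by blast
  obtain x r where r: "\<forall>y\<in>A. dist x y \<le> r" using assms(1) unfolding bounded_def by blast
  have "infdist a B \<le> r + dist x b" if "a \<in> A" for a
  proof -
    have "infdist a B \<le> dist a b" using b by (rule infdist_le)
    also have "\<dots> \<le> dist x a + dist x b" by (rule dist_triangle3)
    finally show ?thesis using r that by force
  qed
  then show ?thesis by (rule bdd_aboveI2)
qed

lemma hausdorff_dist_nonneg: "0 \<le> hausdorff_dist A B"
proof (cases "A \<noteq> {} \<and> B \<noteq> {} \<and> bounded A \<and> bounded B")
  case True
  then obtain a where a: "a \<in> A" by blast
  have "0 \<le> infdist a B" by (rule infdist_nonneg)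
  also have "\<dots> \<le> (SUP a\<in>A. infdist a B)"
    using True a by (intro cSUP_upper bdd_above_infdist_image) auto
  finally show ?thesis unfolding hausdorff_dist_def using True by auto
qed (auto simp: hausdorff_dist_def)

lemma hausdorff_dist_commute: "hausdorff_dist A B = hausdorff_dist B A"
  unfolding hausdorff_dist_def by (auto simp: max.commute)

lemma infdist_le_iff_compact:
  fixes B :: "'a::metric_space set"
  assumes "compact B" "B \<noteq> {}"
  shows "infdist a B \<le> e \<longleftrightarrow> (\<exists>b\<in>B. dist a b \<le> e)"
proof
  have "continuous_on B (dist a)" by (intro continuous_intros)
  then obtain b where b: "b \<in> B" "\<forall>y\<in>B. dist a b \<le> dist a y"
    using continuous_attains_inf[OF assms] by blast
  then have "infdist a B = dist a b"
    by (metis antisym assms(2) cINF_greatest infdist_def infdist_le)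
  then show "infdist a B \<le> e \<Longrightarrow> \<exists>b\<in>B. dist a b \<le> e" using b(1) by auto
qed (auto intro: infdist_le2)

lemma hausdorff_dist_le_iff:
  fixes A B :: "'a::metric_space set"
  assumes "compact A" "compact B" "A \<noteq> {}" "B \<noteq> {}"
  shows "hausdorff_dist A B \<le> e \<longleftrightarrow>
     (\<forall>a\<in>A. \<exists>b\<in>B. dist a b \<le> e) \<and> (\<forall>b\<in>B. \<exists>a\<in>A. dist a b \<le> e)"
proof -
  have bounded: "bounded A" "bounded B" using assms compact_imp_bounded by auto
  then have "hausdorff_dist A B \<le> e \<longleftrightarrow> (\<forall>a\<in>A. infdist a B \<le> e) \<and> (\<forall>b\<in>B. infdist b A \<le> e)"
    using assms by (simp add: hausdorff_dist_def cSUP_le_iff bdd_above_infdist_image)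
  then show ?thesis
    using assms by (simp add: infdist_le_iff_compact dist_commute)
qed

lemma hausdorff_dist_less_left:
  fixes A B :: "'a::metric_space set"
  assumes "compact A" "compact B" "A \<noteq> {}" "B \<noteq> {}" "hausdorff_dist A B < e" "a \<in> A"
  obtains b where "b \<in> B" "dist a b < e"
  using hausdorff_dist_le_iff[OF assms(1-4), of "hausdorff_dist A B"] assms(5,6) by force

lemma hausdorff_dist_less_right:
  fixes A B :: "'a::metric_space set"
  assumes "compact A" "compact B" "A \<noteq> {}" "B \<noteq> {}" "hausdorff_dist A B < e" "b \<in> B"
  obtains a where "a \<in> A" "dist a b < e"
  using hausdorff_dist_le_iff[OF assms(1-4), of "hausdorff_dist A B"] assms(5,6) by force

lemma hausdorff_dist_triangle:
  fixes A B C :: "'a::metric_space set"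
  assumes "compact A" "compact B" "compact C" "A \<noteq> {}" "B \<noteq> {}" "C \<noteq> {}"
  shows "hausdorff_dist A C \<le> hausdorff_dist A B + hausdorff_dist B C"
proof -
  have AB: "(\<forall>a\<in>A. \<exists>b\<in>B. dist a b \<le> hausdorff_dist A B) \<and> (\<forall>b\<in>B. \<exists>a\<in>A. dist a b \<le> hausdorff_dist A B)"
   and BC: "(\<forall>b\<in>B. \<exists>c\<in>C. dist b c \<le> hausdorff_dist B C) \<and> (\<forall>c\<in>C. \<exists>b\<in>B. dist b c \<le> hausdorff_dist B C)"
    using hausdorff_dist_le_iff assms by blast+
  show ?thesis
    unfolding hausdorff_dist_le_iff[OF assms(1,3,4,6)]
    using AB BC by (smt (verit, best) dist_triangle)
qed

lemma hausdorff_dist_eq_0_iff: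
  fixes A B :: "'a::metric_space set"
  assumes "compact A" "compact B" "A \<noteq> {}" "B \<noteq> {}"
  shows "hausdorff_dist A B = 0 \<longleftrightarrow> A = B"
  using hausdorff_dist_le_iff[OF assms, of 0] hausdorff_dist_nonneg[of A B]
  by (metis dist_le_zero_iff dual_order.antisym subsetI subset_antisym)

lemma hausdorff_dist_singletons [simp]: "hausdorff_dist {a} {b} = dist a b"
  by (simp add: hausdorff_dist_def dist_commute)

lemma dist_le_hausdorff_dist_singleton:
  fixes A :: "'a::metric_space set"
  assumes "bounded A" "a \<in> A"
  shows "dist a y \<le> hausdorff_dist A {y}"
proof -
  have "dist a y = infdist a {y}" by simp
  also have "\<dots> \<le> (SUP a\<in>A. infdist a {y})"
    using assms by (intro cSUP_upper bdd_above_infdist_image) auto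
  also have "\<dots> \<le> hausdorff_dist A {y}"
    using assms unfolding hausdorff_dist_def by auto
  finally show ?thesis .
qed

section \<open>The hyperspace of a compact metric space\<close>

lemma hyperspaceD:
  assumes "compact X" "A \<in> hyperspace X"
  shows "compact A" "A \<noteq> {}" "A \<subseteq> X"
  using assms compact_Int_closed[of X A] unfolding hyperspace_def by (auto simp: Int_absorb1)

lemma Metric_space_hyperspace:
  assumes "compact X"
  shows "Metric_space (hyperspace X) hausdorff_dist"
proof
  fix A B C assume A: "A \<in> hyperspace X" and B: "B \<in> hyperspace X" and C: "C \<in> hyperspace X"
  show "hausdorff_dist A B = 0 \<longleftrightarrow> A = B"
    using hyperspaceD[OF assms A] hyperspaceD[OF assms B] by (simp add: hausdorff_dist_eq_0_iff)
  show "hausdorff_dist A C \<le> hausdorff_dist A B + hausdorff_dist B C"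
    using hyperspaceD[OF assms A] hyperspaceD[OF assms B] hyperspaceD[OF assms C]
    by (intro hausdorff_dist_triangle)
qed (auto intro: hausdorff_dist_nonneg hausdorff_dist_commute)

lemma hausdorff_dist_image_less:
  fixes f :: "'a::metric_space \<Rightarrow> 'b::metric_space"
  assumes "compact X" "continuous_on X f" "e > 0"
  obtains d where "d > 0" and "\<And>A B. A \<in> hyperspace X \<Longrightarrow> B \<in> hyperspace X \<Longrightarrow>
      hausdorff_dist A B < d \<Longrightarrow> hausdorff_dist (f ` A) (f ` B) < e"
proof -
  have "uniformly_continuous_on X f" by (rule compact_uniformly_continuous[OF assms(2,1)])
  moreover have "e/2 > 0" using assms(3) by simp
  ultimately obtain d where d: "d > 0" "\<forall>x\<in>X. \<forall>x'\<in>X. dist x' x < d \<longrightarrow> dist (f x') (f x) < e/2"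
    unfolding uniformly_continuous_on_def by blast
  have image_less: "hausdorff_dist (f ` A) (f ` B) < e"
    if "A \<in> hyperspace X" "B \<in> hyperspace X" and AB: "hausdorff_dist A B < d" for A B
  proof -
    note A = hyperspaceD[OF assms(1) that(1)] and B = hyperspaceD[OF assms(1) that(2)]
    have compact: "compact (f ` A)" "compact (f ` B)"
      using A B by (auto intro: compact_continuous_image continuous_on_subset[OF assms(2)])
    have nonempty: "f ` A \<noteq> {}" "f ` B \<noteq> {}" using A(2) B(2) by auto
    have "hausdorff_dist (f ` A) (f ` B) \<le> e/2"
      unfolding hausdorff_dist_le_iff[OF compact nonempty]
    proof (intro conjI ballI)
      fix a' assume "a' \<in> f ` A"
      then obtain a b where "a' = f a" "a \<in> A" "b \<in> B" "dist a b < d"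
        using hausdorff_dist_less_left[OF A(1) B(1) A(2) B(2) AB] by blast
      then have "dist (f a) (f b) < e/2" using d(2) A(3) B(3) by (auto simp: dist_commute)
      then show "\<exists>b'\<in>f ` B. dist a' b' \<le> e/2"
        using \<open>a' = f a\<close> \<open>b \<in> B\<close> by (intro bexI[of _ "f b"]) auto
    next
      fix b' assume "b' \<in> f ` B"
      then obtain a b where "b' = f b" "a \<in> A" "b \<in> B" "dist a b < d"
        using hausdorff_dist_less_right[OF A(1) B(1) A(2) B(2) AB] by blast
      then have "dist (f a) (f b) < e/2" using d(2) A(3) B(3) by (auto simp: dist_commute)
      then show "\<exists>a'\<in>f ` A. dist a' b' \<le> e/2"
        using \<open>b' = f b\<close> \<open>a \<in> A\<close> by (intro bexI[of _ "f a"]) auto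
    qed
    then show ?thesis using \<open>e > 0\<close> by linarith
  qed
  show ?thesis using d(1) image_less by (rule that)
qed

lemma hausdorff_dist_le_subset_of_net:
  fixes A N :: "'a::metric_space set"
  assumes "compact A" "A \<noteq> {}" "finite N" "A \<subseteq> (\<Union>k\<in>N. ball k r)"
  obtains S where "S \<subseteq> N" "S \<noteq> {}" "hausdorff_dist S A \<le> r"
proof -
  define S where "S = {k\<in>N. \<exists>a\<in>A. dist a k < r}"
  have near: "\<exists>k\<in>S. dist k a \<le> r" if "a \<in> A" for a
  proof -
    have "a \<in> (\<Union>k\<in>N. ball k r)" using assms(4) \<open>a \<in> A\<close> by blast
    then obtain k where "k \<in> N" "dist k a < r" by auto
    then have "k \<in> S" using \<open>a \<in> A\<close> unfolding S_def by (auto simp: dist_commute)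
    with \<open>dist k a < r\<close> show ?thesis by (auto intro!: bexI[of _ k])
  qed
  have "S \<subseteq> N" unfolding S_def by blast
  have "S \<noteq> {}" using near assms(2) by blast
  have "finite S" using \<open>S \<subseteq> N\<close> assms(3) by (rule finite_subset)
  then have "compact S" by (rule finite_imp_compact)
  have "\<forall>k\<in>S. \<exists>a\<in>A. dist k a \<le> r"
    using less_imp_le by (fastforce simp: S_def dist_commute)
  then have "hausdorff_dist S A \<le> r"
    unfolding hausdorff_dist_le_iff[OF \<open>compact S\<close> assms(1) \<open>S \<noteq> {}\<close> assms(2)] using near by blast
  with \<open>S \<subseteq> N\<close> \<open>S \<noteq> {}\<close> show ?thesis by (rule that)
qed

lemma mtotally_bounded_hyperspace:
  assumes "compact X"
  shows "Metric_space.mtotally_bounded (hyperspace X) hausdorff_dist (hyperspace X)"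
proof -
  interpret H: Metric_space "hyperspace X" hausdorff_dist
    by (rule Metric_space_hyperspace[OF assms])
  show ?thesis unfolding H.mtotally_bounded_def
  proof (intro allI impI)
    fix e :: real assume e: "e > 0"
    have "e/2 > 0" using e by simp
    then obtain N where N: "finite N" "N \<subseteq> X" "X \<subseteq> (\<Union>k\<in>N. ball k (e/2))"
      using seq_compact_imp_totally_bounded[OF compact_imp_seq_compact[OF assms], rule_format, OF \<open>e/2 > 0\<close>]
      by (elim exE conjE)
    have net: "Pow N - {{}} \<subseteq> hyperspace X"
      using N(1,2) unfolding hyperspace_def by (auto intro: finite_imp_closed rev_finite_subset)
    have "hyperspace X \<subseteq> (\<Union>S\<in>Pow N - {{}}. H.mball S e)"
    proof
      fix A assume A: "A \<in> hyperspace X"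
      note A' = hyperspaceD[OF assms A]
      have "A \<subseteq> (\<Union>k\<in>N. ball k (e/2))" using A'(3) N(3) by (rule subset_trans)
      then obtain S where S: "S \<subseteq> N" "S \<noteq> {}" "hausdorff_dist S A \<le> e/2"
        by (rule hausdorff_dist_le_subset_of_net[OF A'(1,2) N(1)])
      then have "S \<in> Pow N - {{}}" by blast
      moreover have "S \<in> hyperspace X" using \<open>S \<in> Pow N - {{}}\<close> net by blast
      then have "A \<in> H.mball S e" using A S(3) e by simp
      ultimately show "A \<in> (\<Union>S\<in>Pow N - {{}}. H.mball S e)" by blast
    qed
    moreover have "finite (Pow N - {{}})" using N(1) by simp
    ultimately show "\<exists>K. finite K \<and> K \<subseteq> hyperspace X \<and> hyperspace X \<subseteq> (\<Union>S\<in>K. H.mball S e)"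
      using net by blast
  qed
qed

definition kuratowski_limsup :: "(nat \<Rightarrow> 'a::topological_space set) \<Rightarrow> 'a set" where
  "kuratowski_limsup S = (\<Inter>N. closure (\<Union>n\<in>{N..}. S n))"

lemma closed_kuratowski_limsup: "closed (kuratowski_limsup S)"
  unfolding kuratowski_limsup_def by blast

lemma kuratowski_limsup_subset:
  assumes "closed X" "\<And>n. S n \<subseteq> X"
  shows "kuratowski_limsup S \<subseteq> X"
proof -
  have "closure (\<Union>n\<in>{0..}. S n) \<subseteq> X" using assms by (intro closure_minimal) auto
  then show ?thesis unfolding kuratowski_limsup_def by blast
qed

lemma mem_kuratowski_limsup_iff:
  fixes S :: "nat \<Rightarrow> 'a::metric_space set"
  shows "x \<in> kuratowski_limsup S \<longleftrightarrow> (\<forall>N. \<forall>e>0. \<exists>n\<ge>N. \<exists>y\<in>S n. dist y x < e)"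
  by (simp add: kuratowski_limsup_def closure_approachable) blast

lemma kuratowski_limsup_close_to_tail:
  fixes S :: "nat \<Rightarrow> 'a::metric_space set"
  assumes "\<And>n. compact (S n)" "\<And>n. S n \<noteq> {}"
    and Cauchy: "\<And>m n. N \<le> m \<Longrightarrow> N \<le> n \<Longrightarrow> hausdorff_dist (S m) (S n) < e"
    and "N \<le> n" "x \<in> kuratowski_limsup S"
  obtains z where "z \<in> S n" "dist x z < 2 * e"
proof -
  have "e > 0" using Cauchy[of N N] hausdorff_dist_nonneg[of "S N" "S N"] by simp
  then obtain m y where "N \<le> m" "y \<in> S m" "dist y x < e"
    using assms(5) unfolding mem_kuratowski_limsup_iff by blast
  obtain z where "z \<in> S n" "dist y z < e"
    by (rule hausdorff_dist_less_left[OF assms(1,1,2,2) Cauchy[OF \<open>N \<le> m\<close> \<open>N \<le> n\<close>] \<open>y \<in> S m\<close>])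
  have "dist x z \<le> dist y x + dist y z" by (rule dist_triangle3)
  then have "dist x z < 2 * e" using \<open>dist y x < e\<close> \<open>dist y z < e\<close> by linarith
  with \<open>z \<in> S n\<close> show ?thesis by (rule that)
qed

lemma tail_close_to_kuratowski_limsup:
  fixes S :: "nat \<Rightarrow> 'a::metric_space set"
  assumes "compact X" "\<And>n. S n \<subseteq> X" "\<And>n. compact (S n)" "\<And>n. S n \<noteq> {}"
    and Cauchy: "\<And>m n. N \<le> m \<Longrightarrow> N \<le> n \<Longrightarrow> hausdorff_dist (S m) (S n) < e"
    and "N \<le> n" "a \<in> S n"
  obtains x where "x \<in> kuratowski_limsup S" "dist a x \<le> e"
proof -
  have "\<exists>b. b \<in> S (m + N) \<and> dist a b < e" for m
    using hausdorff_dist_less_left[OF assms(3,3,4,4) Cauchy[OF \<open>N \<le> n\<close>, of "m + N"] \<open>a \<in> S n\<close>]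
    by auto
  then obtain b where b: "\<forall>m. b m \<in> S (m + N) \<and> dist a (b m) < e" by metis
  then obtain l r where "strict_mono r" and lim: "(b \<circ> r) \<longlonglongrightarrow> l"
    using compact_imp_seq_compact[OF assms(1)] assms(2) unfolding seq_compact_def by blast
  have "(\<lambda>k. dist a ((b \<circ> r) k)) \<longlonglongrightarrow> dist a l" by (intro tendsto_intros lim)
  then have dist: "dist a l \<le> e" by (rule LIMSEQ_le_const2) (use b less_imp_le in auto)
  have "l \<in> closure (\<Union>n\<in>{M..}. S n)" for M
  proof (rule Lim_in_closed_set[OF closed_closure _ trivial_limit_sequentially lim])
    have "(b \<circ> r) k \<in> (\<Union>n\<in>{M..}. S n)" if "M \<le> k" for k
      using b seq_suble[OF \<open>strict_mono r\<close>, of k] that by force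
    then show "\<forall>\<^sub>F k in sequentially. (b \<circ> r) k \<in> closure (\<Union>n\<in>{M..}. S n)"
      unfolding eventually_sequentially using closure_subset by blast
  qed
  then have "l \<in> kuratowski_limsup S" unfolding kuratowski_limsup_def by blast
  then show ?thesis using dist by (rule that)
qed

lemma kuratowski_limsup_approximates_tail:
  fixes S :: "nat \<Rightarrow> 'a::metric_space set"
  assumes "compact X" "\<And>n. S n \<subseteq> X" "\<And>n. compact (S n)" "\<And>n. S n \<noteq> {}"
    and Cauchy: "\<And>m n. N \<le> m \<Longrightarrow> N \<le> n \<Longrightarrow> hausdorff_dist (S m) (S n) < e"
    and "N \<le> n"
  shows "(\<forall>a\<in>S n. \<exists>x\<in>kuratowski_limsup S. dist a x \<le> 2 * e) \<and>
    (\<forall>x\<in>kuratowski_limsup S. \<exists>a\<in>S n. dist a x \<le> 2 * e)"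
proof safe
  have "e > 0" using Cauchy[of N N] hausdorff_dist_nonneg[of "S N" "S N"] by simp
  fix a assume "a \<in> S n"
  obtain x where "x \<in> kuratowski_limsup S" "dist a x \<le> e"
    by (rule tail_close_to_kuratowski_limsup[of X S, OF assms \<open>a \<in> S n\<close>])
  then show "\<exists>x\<in>kuratowski_limsup S. dist a x \<le> 2 * e" using \<open>e > 0\<close> by force
next
  fix x assume "x \<in> kuratowski_limsup S"
  obtain a where "a \<in> S n" "dist x a < 2 * e"
    by (rule kuratowski_limsup_close_to_tail[of S, OF assms(3,4) Cauchy \<open>N \<le> n\<close> \<open>x \<in> kuratowski_limsup S\<close>])
  then show "\<exists>a\<in>S n. dist a x \<le> 2 * e" by (force simp: dist_commute)
qed

lemma mcomplete_hyperspace: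
  assumes "compact X"
  shows "Metric_space.mcomplete (hyperspace X) hausdorff_dist"
proof -
  interpret H: Metric_space "hyperspace X" hausdorff_dist
    by (rule Metric_space_hyperspace[OF assms])
  show ?thesis unfolding H.mcomplete_def
  proof (intro allI impI)
    fix S assume "H.MCauchy S"
    then have SH: "\<And>n. S n \<in> hyperspace X"
      and Cauchy: "\<And>e. e > 0 \<Longrightarrow> \<exists>N. \<forall>m n. N \<le> m \<longrightarrow> N \<le> n \<longrightarrow> hausdorff_dist (S m) (S n) < e"
      unfolding H.MCauchy_def by auto
    note S = hyperspaceD[OF assms SH]
    (* The limit of a Cauchy sequence is its Kuratowski upper limit. *)
    define L where "L = kuratowski_limsup S"
    have "closed L" "L \<subseteq> X"
      unfolding L_def using closed_kuratowski_limsup kuratowski_limsup_subset[of X S, OF compact_imp_closed[OF assms] S(3)]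
      by blast+
    have close: "\<exists>N. \<forall>n\<ge>N. (\<forall>a\<in>S n. \<exists>x\<in>L. dist a x \<le> 2 * e) \<and> (\<forall>x\<in>L. \<exists>a\<in>S n. dist a x \<le> 2 * e)"
      if "e > 0" for e
    proof -
      obtain N where "\<And>m n. N \<le> m \<Longrightarrow> N \<le> n \<Longrightarrow> hausdorff_dist (S m) (S n) < e"
        using Cauchy[OF \<open>e > 0\<close>] by blast
      then show ?thesis
        using kuratowski_limsup_approximates_tail[of X S, OF assms S(3,1,2)] unfolding L_def by blast
    qed
    obtain N where "\<forall>n\<ge>N. \<forall>a\<in>S n. \<exists>x\<in>L. dist a x \<le> 2" using close[of 1] by auto
    moreover obtain a where "a \<in> S N" using S(2) by blast
    ultimately have "L \<noteq> {}" by blast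
    then have L: "L \<in> hyperspace X" "compact L"
      using \<open>L \<subseteq> X\<close> \<open>closed L\<close> compact_Int_closed[OF assms \<open>closed L\<close>]
      unfolding hyperspace_def by (auto simp: Int_absorb1)
    have "\<exists>N. \<forall>n\<ge>N. hausdorff_dist (S n) L < e" if "e > 0" for e
    proof -
      have "e/3 > 0" using \<open>e > 0\<close> by simp
      then obtain N where N: "\<forall>n\<ge>N. (\<forall>a\<in>S n. \<exists>x\<in>L. dist a x \<le> 2 * (e/3)) \<and>
          (\<forall>x\<in>L. \<exists>a\<in>S n. dist a x \<le> 2 * (e/3))"
        using close by blast
      have "hausdorff_dist (S n) L < e" if "N \<le> n" for n
      proof -
        have "hausdorff_dist (S n) L \<le> 2 * (e/3)"
          using N that hausdorff_dist_le_iff[OF S(1) L(2) S(2) \<open>L \<noteq> {}\<close>] by blast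
        then show ?thesis using \<open>e > 0\<close> by linarith
      qed
      then show ?thesis by blast
    qed
    then have "limitin H.mtopology S L sequentially"
      unfolding H.limit_metric_sequentially using L(1) SH by blast
    then show "\<exists>L. limitin H.mtopology S L sequentially" by blast
  qed
qed

lemma compact_space_hyper_top:
  assumes "compact X"
  shows "compact_space (hyper_top X)"
  using Metric_space.compact_space_eq_mcomplete_mtotally_bounded[OF Metric_space_hyperspace[OF assms]]
    mtotally_bounded_hyperspace[OF assms] mcomplete_hyperspace[OF assms] by blast

lemma hyper_top_limitD:
  assumes "compact X" "limitin (hyper_top X) S L sequentially"
  shows "L \<in> hyperspace X" "(\<lambda>k. hausdorff_dist (S k) L) \<longlonglongrightarrow> 0"
  using Metric_space.limitin_metric_dist_null[OF Metric_space_hyperspace[OF assms(1)]] assms(2)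
  by auto

lemma hyper_top_limit_approximable:
  assumes "compact X" "limitin (hyper_top X) S L sequentially" "\<And>k. S k \<in> hyperspace X" "x \<in> L"
  obtains xs where "\<And>k. xs k \<in> S k" "xs \<longlonglongrightarrow> x"
proof -
  note L = hyperspaceD[OF assms(1) hyper_top_limitD(1)[OF assms(1,2)]]
  note S = hyperspaceD[OF assms(1) assms(3)]
  have "\<exists>y\<in>S k. dist x y \<le> hausdorff_dist L (S k)" for k
    using hausdorff_dist_le_iff[OF L(1) S(1)[of k] L(2) S(2)[of k], of "hausdorff_dist L (S k)"] \<open>x \<in> L\<close>
    by blast
  then obtain xs where xs: "\<And>k. xs k \<in> S k" "\<And>k. dist x (xs k) \<le> hausdorff_dist L (S k)"
    by metis
  have "(\<lambda>k. dist (xs k) x) \<longlonglongrightarrow> 0"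
    using xs(2) by (intro Lim_null_comparison[OF _ hyper_top_limitD(2)[OF assms(1,2)]])
      (simp add: dist_commute hausdorff_dist_commute)
  then have "xs \<longlonglongrightarrow> x" by (rule tendsto_dist_iff[THEN iffD2])
  with xs(1) show ?thesis by (rule that)
qed

lemma hyper_top_limit_mem:
  assumes "compact X" "limitin (hyper_top X) S L sequentially" "\<And>k. S k \<in> hyperspace X"
    and "\<And>k. xs k \<in> S k" "xs \<longlonglongrightarrow> x"
  shows "x \<in> L"
proof -
  have L_hyper: "L \<in> hyperspace X" by (rule hyper_top_limitD(1)[OF assms(1,2)])
  note L = hyperspaceD[OF assms(1) L_hyper]
  note S = hyperspaceD[OF assms(1) assms(3)]
  have "\<exists>y\<in>L. dist (xs k) y \<le> hausdorff_dist (S k) L" for k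
    using hausdorff_dist_le_iff[OF S(1)[of k] L(1) S(2)[of k] L(2), of "hausdorff_dist (S k) L"] assms(4)
    by blast
  then obtain ys where ys: "\<And>k. ys k \<in> L" "\<And>k. dist (xs k) (ys k) \<le> hausdorff_dist (S k) L"
    by metis
  have "dist (ys k) x \<le> hausdorff_dist (S k) L + dist (xs k) x" for k
    using dist_triangle3[of "ys k" x "xs k"] ys(2)[of k] by linarith
  then have "\<forall>\<^sub>F k in sequentially. norm (dist (ys k) x) \<le> hausdorff_dist (S k) L + dist (xs k) x"
    by (intro always_eventually) simp
  moreover have "(\<lambda>k. hausdorff_dist (S k) L + dist (xs k) x) \<longlonglongrightarrow> 0"
    using hyper_top_limitD(2)[OF assms(1,2)] assms(5)[THEN tendsto_dist_iff[THEN iffD1]]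
    by (rule tendsto_add_zero)
  ultimately have "(\<lambda>k. dist (ys k) x) \<longlonglongrightarrow> 0" by (rule Lim_null_comparison)
  then have "ys \<longlonglongrightarrow> x" by (rule tendsto_dist_iff[THEN iffD2])
  moreover have "closed L" using L_hyper unfolding hyperspace_def by blast
  ultimately show ?thesis using ys(1) closed_sequentially by blast
qed

lemma hyper_top_limit_subset:
  assumes "compact X"
    and "limitin (hyper_top X) S A sequentially" "limitin (hyper_top X) T B sequentially"
    and "\<And>k. S k \<in> hyperspace X" "\<And>k. T k \<in> hyperspace X" "\<And>k. S k \<subseteq> T k"
  shows "A \<subseteq> B"
proof
  fix x assume "x \<in> A"
  then obtain xs where "\<And>k. xs k \<in> S k" "xs \<longlonglongrightarrow> x"
    using hyper_top_limit_approximable[OF assms(1,2,4)] by blast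
  then show "x \<in> B"
    using hyper_top_limit_mem[OF assms(1,3,5)] assms(6) by blast
qed

lemma image_in_hyperspace:
  assumes "compact X" "continuous_on X f" "f ` X \<subseteq> X'" "A \<in> hyperspace X"
  shows "f ` A \<in> hyperspace X'"
proof -
  note A = hyperspaceD[OF assms(1,4)]
  have "compact (f ` A)" using A by (intro compact_continuous_image continuous_on_subset[OF assms(2)])
  then show ?thesis
    using A assms(3) unfolding hyperspace_def by (auto intro: compact_imp_closed)
qed


lemma (in Metric_space) mball_eq_UN_mcball: "mball x r = (\<Union>n. mcball x (r - inverse (Suc n)))"
proof (intro equalityI subsetI)
  fix y assume y: "y \<in> mball x r"
  then obtain n where "inverse (real (Suc n)) < r - d x y"
    using reals_Archimedean[of "r - d x y"] by auto
  with y have "y \<in> mcball x (r - inverse (Suc n))" by auto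
  then show "y \<in> (\<Union>n. mcball x (r - inverse (Suc n)))" by blast
next
  fix y assume "y \<in> (\<Union>n. mcball x (r - inverse (Suc n)))"
  then obtain n where "x \<in> M" "y \<in> M" and le: "d x y \<le> r - inverse (Suc n)" by auto
  have "inverse (real (Suc n)) > 0" by simp
  then have "d x y < r" using le by linarith
  with \<open>x \<in> M\<close> \<open>y \<in> M\<close> show "y \<in> mball x r" by simp
qed

section \<open>Closures of the fibres of a factor map\<close>

locale factor_fibres =
  fixes X :: "'a::metric_space set" and p :: "'a \<Rightarrow> 'b::metric_space" and Y :: "'b set"
    and \<nu> :: "'b measure"
  assumes compact_X: "compact X"
    and continuous_p: "continuous_on X p"
    and image_p: "p ` X = Y"
    and sets_\<nu>: "sets \<nu> = sets (restrict_space borel Y)"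
    and finite_measure_\<nu>: "finite_measure \<nu>"
begin

sublocale H: Metric_space "hyperspace X" hausdorff_dist
  by (rule Metric_space_hyperspace[OF compact_X])

abbreviation fibre :: "'b \<Rightarrow> 'a set" where
  "fibre y \<equiv> p -` {y} \<inter> X"

abbreviation \<X> :: "'a set set" where
  "\<X> \<equiv> fibre_closure X p Y"

abbreviation \<X>\<^sub>m :: "'a set set" where
  "\<X>\<^sub>m \<equiv> fibre_meas X p Y \<nu>"

abbreviation \<V> :: "'a set set" where
  "\<V> \<equiv> {F \<in> hyperspace X. Vset X p Y \<nu> F = p ` F}"

lemma fibre_in_hyperspace:
  assumes "y \<in> Y"
  shows "fibre y \<in> hyperspace X"
proof -
  have "closed (X \<inter> p -` {y})"
    by (rule continuous_closed_preimage[OF continuous_p compact_imp_closed[OF compact_X] closed_singleton])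
  moreover have "fibre y \<noteq> {}" using assms image_p by blast
  ultimately show ?thesis unfolding hyperspace_def by (auto simp: Int_commute)
qed

lemma fibre_closure_iff:
  "E \<in> \<X> \<longleftrightarrow> E \<in> hyperspace X \<and> (\<forall>r>0. \<exists>y\<in>Y. hausdorff_dist E (fibre y) < r)"
proof -
  have "E \<in> \<X> \<longleftrightarrow> E \<in> hyperspace X \<and> (\<forall>r>0. \<exists>y\<in>Y. fibre y \<in> H.mball E r)"
    unfolding fibre_closure_def H.metric_closure_of by blast
  also have "\<dots> \<longleftrightarrow> E \<in> hyperspace X \<and> (\<forall>r>0. \<exists>y\<in>Y. hausdorff_dist E (fibre y) < r)"
    using fibre_in_hyperspace by auto
  finally show ?thesis .
qed

lemma fibre_closure_subset_hyperspace: "\<X> \<subseteq> hyperspace X"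
  using fibre_closure_iff by blast

lemma closedin_fibre_closure: "closedin H.mtopology \<X>"
  unfolding fibre_closure_def by (rule closedin_closure_of)

lemma fibre_closureD:
  assumes "E \<in> \<X>"
  shows "compact E" "E \<noteq> {}" "E \<subseteq> X"
  using hyperspaceD[OF compact_X] fibre_closure_subset_hyperspace assms by blast+

lemma image_fibre_closure:
  assumes "E \<in> \<X>"
  shows "p ` E = {pi_X p E}" "pi_X p E \<in> Y"
proof -
  note E = fibre_closureD[OF assms]
  have "bounded (p ` E)"
    using E by (intro compact_imp_bounded compact_continuous_image continuous_on_subset[OF continuous_p])
  have close: "dist (p a) (p b) \<le> 2 * e" if "a \<in> E" "b \<in> E" "e > 0" for a b e
  proof -
    obtain d where "d > 0" and image_less: "\<And>A B. A \<in> hyperspace X \<Longrightarrow> B \<in> hyperspace X \<Longrightarrow>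
        hausdorff_dist A B < d \<Longrightarrow> hausdorff_dist (p ` A) (p ` B) < e"
      using hausdorff_dist_image_less[OF compact_X continuous_p \<open>e > 0\<close>] by blast
    then obtain y where "y \<in> Y" "hausdorff_dist E (fibre y) < d"
      using assms unfolding fibre_closure_iff by blast
    moreover have "p ` fibre y = {y}" using \<open>y \<in> Y\<close> image_p by auto
    ultimately have "hausdorff_dist (p ` E) {y} < e"
      using image_less[of E "fibre y"] assms fibre_closure_subset_hyperspace fibre_in_hyperspace by auto
    then have "dist (p a) y \<le> e" "dist (p b) y \<le> e"
      using dist_le_hausdorff_dist_singleton[OF \<open>bounded (p ` E)\<close>] that(1,2)
      by (meson imageI less_imp_le order_trans)+
    then show ?thesis using dist_triangle2[of "p a" "p b" y] by linarith
  qed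
  have "p a = p b" if "a \<in> E" "b \<in> E" for a b
  proof -
    have "dist (p a) (p b) \<le> 0 + e" if "e > 0" for e
      using close[OF \<open>a \<in> E\<close> \<open>b \<in> E\<close>, of "e/2"] that by simp
    then show ?thesis using field_le_epsilon[of "dist (p a) (p b)" 0] by simp
  qed
  moreover obtain a where "a \<in> E" using E(2) by blast
  ultimately have "p ` E = {p a}" by blast
  then show "p ` E = {pi_X p E}" "pi_X p E \<in> Y"
    using \<open>a \<in> E\<close> E(3) image_p unfolding pi_X_def by auto
qed

lemma pi_X_eq:
  assumes "E \<in> \<X>" "x \<in> E"
  shows "pi_X p E = p x"
  using image_fibre_closure(1)[OF assms(1)] imageI[OF assms(2), of p] by simp

lemma pi_X_uniformly_continuous:
  assumes "e > 0"
  obtains d where "d > 0"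
    "\<And>E E'. E \<in> \<X> \<Longrightarrow> E' \<in> \<X> \<Longrightarrow> hausdorff_dist E E' < d \<Longrightarrow> dist (pi_X p E) (pi_X p E') < e"
proof -
  obtain d where "d > 0" and image_less: "\<And>A B. A \<in> hyperspace X \<Longrightarrow> B \<in> hyperspace X \<Longrightarrow>
      hausdorff_dist A B < d \<Longrightarrow> hausdorff_dist (p ` A) (p ` B) < e"
    using hausdorff_dist_image_less[OF compact_X continuous_p assms] by blast
  have "dist (pi_X p E) (pi_X p E') < e"
    if "E \<in> \<X>" "E' \<in> \<X>" "hausdorff_dist E E' < d" for E E'
    using image_less[of E E'] that fibre_closure_subset_hyperspace
    by (auto simp: image_fibre_closure(1)[OF that(1)] image_fibre_closure(1)[OF that(2)])
  with \<open>d > 0\<close> show ?thesis by (rule that)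
qed

sublocale F: Metric_space \<X> hausdorff_dist
  by (rule H.subspace[OF fibre_closure_subset_hyperspace])

lemma F_mtopology: "F.mtopology = subtopology H.mtopology \<X>"
proof -
  interpret Submetric "hyperspace X" hausdorff_dist \<X>
    by unfold_locales (rule fibre_closure_subset_hyperspace)
  show ?thesis by (rule mtopology_submetric)
qed

lemma compact_space_F: "compact_space F.mtopology"
  unfolding F_mtopology
  by (intro compact_space_subtopology closedin_compact_space compact_space_hyper_top[OF compact_X]
      closedin_fibre_closure)

lemma continuous_map_pi_X: "continuous_map F.mtopology euclidean (pi_X p)"
proof -
  have "\<exists>d>0. \<forall>E'. E' \<in> \<X> \<and> hausdorff_dist E E' < d \<longrightarrow> dist (pi_X p E) (pi_X p E') < e"
    if "E \<in> \<X>" "e > 0" for E e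
  proof -
    obtain d where "d > 0" and d: "\<And>E E'. E \<in> \<X> \<Longrightarrow> E' \<in> \<X> \<Longrightarrow> hausdorff_dist E E' < d \<Longrightarrow>
        dist (pi_X p E) (pi_X p E') < e"
      using pi_X_uniformly_continuous[OF \<open>e > 0\<close>] by blast
    then show ?thesis using \<open>E \<in> \<X>\<close> by blast
  qed
  then show ?thesis
    using F.metric_continuous_map[OF Met_TC.Metric_space_axioms, of "pi_X p"] by simp
qed

lemma tendsto_pi_X:
  assumes "limitin H.mtopology S E sequentially" "\<And>k. S k \<in> \<X>" "E \<in> \<X>"
  shows "(\<lambda>k. pi_X p (S k)) \<longlonglongrightarrow> pi_X p E"
proof -
  have "limitin F.mtopology S E sequentially"
    unfolding F_mtopology limitin_subtopology using assms by auto
  then show ?thesis using continuous_map_limit[OF continuous_map_pi_X] by (simp add: o_def)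
qed

lemma pi_X_image_subset: "pi_X p ` \<X> \<subseteq> Y"
  using image_fibre_closure(2) by blast

(* Measures of non-measurable sets are 0, so the monotonicity arguments for X_meas need this. *)
lemma sets_pi_X_mball: "pi_X p ` F.mball E e \<in> sets \<nu>"
proof -
  define K where "K n = F.mcball E (e - inverse (Suc n))" for n :: nat
  have "pi_X p ` F.mball E e = (\<Union>n. pi_X p ` K n)"
    unfolding K_def F.mball_eq_UN_mcball by blast
  moreover have "pi_X p ` K n \<in> sets borel" for n
  proof -
    have "compactin euclidean (pi_X p ` K n)"
      unfolding K_def
      by (intro image_compactin[OF _ continuous_map_pi_X] closedin_compact_space[OF compact_space_F]
          F.closedin_mcball)
    then show ?thesis by (simp add: borel_closed compact_imp_closed)
  qed
  ultimately have "pi_X p ` F.mball E e \<in> sets borel" by (simp add: image_subset_iff sets.countable_UN)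
  moreover have "pi_X p ` F.mball E e \<subseteq> Y" using pi_X_image_subset by auto
  moreover have "Y \<inter> space borel \<in> sets borel"
    using compact_imp_closed[OF compact_continuous_image[OF continuous_p compact_X]] image_p by simp
  ultimately show ?thesis by (simp add: sets_\<nu> sets_restrict_space_iff)
qed

lemma measure_pi_X_mball_mono:
  assumes "F.mball E' e' \<subseteq> F.mball E e"
  shows "measure \<nu> (pi_X p ` F.mball E' e') \<le> measure \<nu> (pi_X p ` F.mball E e)"
  using finite_measure.finite_measure_mono[OF finite_measure_\<nu> image_mono[OF assms] sets_pi_X_mball] .

lemma fibre_meas_subset_fibre_closure: "\<X>\<^sub>m \<subseteq> \<X>"
  unfolding fibre_meas_def by blast

lemma closedin_fibre_meas: "closedin H.mtopology \<X>\<^sub>m"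
proof -
  have "E \<in> \<X>\<^sub>m" if E: "E \<in> H.mtopology closure_of \<X>\<^sub>m" for E
  proof -
    have "E \<in> \<X>"
      using closure_of_mono[OF fibre_meas_subset_fibre_closure] closure_of_closedin[OF closedin_fibre_closure] E
      by blast
    moreover have "measure \<nu> (pi_X p ` F.mball E e) > 0" if "e > 0" for e
    proof -
      have "e/2 > 0" using \<open>e > 0\<close> by simp
      then obtain E' where "E' \<in> \<X>\<^sub>m" "E' \<in> H.mball E (e/2)"
        using E unfolding H.metric_closure_of by blast
      have "F.mball E' (e/2) \<subseteq> F.mball E e"
      proof
        fix E'' assume "E'' \<in> F.mball E' (e/2)"
        then have "hausdorff_dist E E'' \<le> hausdorff_dist E E' + hausdorff_dist E' E''"
          using \<open>E \<in> \<X>\<close> \<open>E' \<in> \<X>\<^sub>m\<close> fibre_meas_subset_fibre_closure by (intro F.triangle) auto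
        then show "E'' \<in> F.mball E e"
          using \<open>E'' \<in> F.mball E' (e/2)\<close> \<open>E' \<in> H.mball E (e/2)\<close> \<open>E \<in> \<X>\<close> by auto
      qed
      moreover have "measure \<nu> (pi_X p ` F.mball E' (e/2)) > 0"
        using \<open>E' \<in> \<X>\<^sub>m\<close> \<open>e > 0\<close> unfolding fibre_meas_def by auto
      ultimately show ?thesis using measure_pi_X_mball_mono by (meson less_le_trans)
    qed
    ultimately show ?thesis unfolding fibre_meas_def by blast
  qed
  moreover have "\<X>\<^sub>m \<subseteq> topspace H.mtopology"
    using fibre_meas_subset_fibre_closure fibre_closure_subset_hyperspace by simp
  ultimately show ?thesis using closure_of_subset_eq by blast
qed

lemma Vset_subset_image: "Vset X p Y \<nu> F \<subseteq> p ` F"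
proof
  fix y assume "y \<in> Vset X p Y \<nu> F"
  then obtain E where "E \<in> \<X>\<^sub>m" "E \<subseteq> F" "pi_X p E = y" unfolding Vset_def by blast
  moreover obtain x where "x \<in> E" using fibre_closureD(2) \<open>E \<in> \<X>\<^sub>m\<close> unfolding fibre_meas_def by blast
  ultimately show "y \<in> p ` F" using pi_X_eq unfolding fibre_meas_def by blast
qed

lemma fibre_meas_below_limit:
  assumes lim: "limitin H.mtopology S F sequentially" and S: "\<And>k. S k \<in> \<V>" and "x \<in> F"
  obtains E where "E \<in> \<X>\<^sub>m" "E \<subseteq> F" "pi_X p E = p x"
proof -
  have S_hyper: "\<And>k. S k \<in> hyperspace X" using S by blast
  obtain xs where xs: "\<And>k. xs k \<in> S k" "xs \<longlonglongrightarrow> x"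
    using hyper_top_limit_approximable[OF compact_X lim S_hyper \<open>x \<in> F\<close>] by blast
  have "\<exists>E. E \<in> \<X>\<^sub>m \<and> E \<subseteq> S k \<and> pi_X p E = p (xs k)" for k
  proof -
    have "p (xs k) \<in> Vset X p Y \<nu> (S k)" using S[of k] xs(1)[of k] by blast
    then show ?thesis unfolding Vset_def by blast
  qed
  then obtain Es where Es: "\<And>k. Es k \<in> \<X>\<^sub>m" "\<And>k. Es k \<subseteq> S k" "\<And>k. pi_X p (Es k) = p (xs k)"
    by metis
  have Es_X: "Es k \<in> \<X>" for k
    using Es(1) fibre_meas_subset_fibre_closure by blast
  then have Es_hyper: "Es k \<in> hyperspace X" for k
    using fibre_closure_subset_hyperspace by blast
  then obtain E r where "strict_mono r" and E_lim: "limitin H.mtopology (Es \<circ> r) E sequentially"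
    using compact_space_hyper_top[OF compact_X] unfolding H.compact_space_sequentially by blast
  have "E \<in> \<X>\<^sub>m"
    using limitin_closedin[OF E_lim closedin_fibre_meas] Es(1) by simp
  have "E \<subseteq> F"
    using hyper_top_limit_subset[OF compact_X E_lim limitin_subsequence[OF \<open>strict_mono r\<close> lim]]
      Es_hyper S_hyper Es(2) by simp
  have "(\<lambda>k. pi_X p ((Es \<circ> r) k)) \<longlonglongrightarrow> pi_X p E"
    using tendsto_pi_X[OF E_lim] Es_X \<open>E \<in> \<X>\<^sub>m\<close> fibre_meas_subset_fibre_closure by auto
  moreover have "(\<lambda>k. p ((xs \<circ> r) k)) \<longlonglongrightarrow> p x"
  proof (rule continuous_on_tendsto_compose[OF continuous_p LIMSEQ_subseq_LIMSEQ[OF xs(2) \<open>strict_mono r\<close>]])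
    show "x \<in> X"
      using \<open>x \<in> F\<close> hyperspaceD(3)[OF compact_X hyper_top_limitD(1)[OF compact_X lim]] by blast
    show "\<forall>\<^sub>F k in sequentially. (xs \<circ> r) k \<in> X"
      using xs(1) hyperspaceD(3)[OF compact_X S_hyper] by (auto intro: always_eventually)
  qed
  ultimately have "pi_X p E = p x" using Es(3) by (simp add: o_def LIMSEQ_unique)
  with \<open>E \<in> \<X>\<^sub>m\<close> \<open>E \<subseteq> F\<close> show ?thesis by (rule that)
qed

lemma closedin_V: "closedin H.mtopology \<V>"
  unfolding H.metric_closedin_iff_sequentially_closed
proof (intro conjI allI impI)
  fix S F assume "range S \<subseteq> \<V> \<and> limitin H.mtopology S F sequentially"
  then have S: "\<And>k. S k \<in> \<V>" and lim: "limitin H.mtopology S F sequentially" by auto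
  have "p ` F \<subseteq> Vset X p Y \<nu> F"
  proof
    fix y assume "y \<in> p ` F"
    then obtain x where "x \<in> F" "y = p x" by blast
    then obtain E where "E \<in> \<X>\<^sub>m" "E \<subseteq> F" "pi_X p E = y"
      using fibre_meas_below_limit[OF lim S] by metis
    then show "y \<in> Vset X p Y \<nu> F"
      using image_fibre_closure(2) fibre_meas_subset_fibre_closure unfolding Vset_def by blast
  qed
  then show "F \<in> \<V>"
    using Vset_subset_image hyper_top_limitD(1)[OF compact_X lim] by blast
qed blast

lemma compactin_V: "compactin H.mtopology \<V>"
  by (rule closedin_compact_space[OF compact_space_hyper_top[OF compact_X] closedin_V])

end

section \<open>Equivariance\<close>

lemma tds_act_inverse:
  assumes "tds X act" "x \<in> X"
  shows "act (- g) (act g x) = x"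
proof -
  have "act g x \<in> X" using assms unfolding tds_def by blast
  then show ?thesis
    using assms unfolding tds_def by (metis add.left_inverse)
qed

locale equivariant_factor_fibres = factor_fibres X p Y \<nu>
  for X :: "'a::metric_space set" and p :: "'a \<Rightarrow> 'b::metric_space" and Y \<nu> +
  fixes act :: "'g::group_add \<Rightarrow> 'a \<Rightarrow> 'a" and actY :: "'g \<Rightarrow> 'b \<Rightarrow> 'b"
  assumes tds_X: "tds X act" and tds_Y: "tds Y actY"
    and equivariant: "\<And>g x. x \<in> X \<Longrightarrow> p (act g x) = actY g (p x)"
    and measure_preserving: "\<And>g A. A \<in> sets \<nu> \<Longrightarrow> emeasure \<nu> (actY g -` A \<inter> Y) = emeasure \<nu> A"
begin

lemma act_in_X: "x \<in> X \<Longrightarrow> act g x \<in> X"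
  using tds_X unfolding tds_def by blast

lemma actY_in_Y: "y \<in> Y \<Longrightarrow> actY g y \<in> Y"
  using tds_Y unfolding tds_def by blast

lemma continuous_on_act: "continuous_on X (act g)"
  using tds_X unfolding tds_def by blast

lemma act_image_in_hyperspace: "A \<in> hyperspace X \<Longrightarrow> act g ` A \<in> hyperspace X"
  by (rule image_in_hyperspace[OF compact_X continuous_on_act]) (use act_in_X in blast)

lemma image_act_fibre:
  assumes "y \<in> Y"
  shows "act g ` fibre y = fibre (actY g y)"
proof (intro equalityI subsetI)
  fix z assume "z \<in> act g ` fibre y"
  then show "z \<in> fibre (actY g y)" using equivariant act_in_X by auto
next
  fix z assume z: "z \<in> fibre (actY g y)"
  then have "act (- g) z \<in> fibre y"
    using equivariant[of z "- g"] tds_act_inverse[OF tds_Y assms] act_in_X by auto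
  moreover have "z = act g (act (- g) z)"
    using tds_act_inverse[OF tds_X, of z "- g"] z by simp
  ultimately show "z \<in> act g ` fibre y" by (rule rev_image_eqI)
qed

lemma act_image_in_fibre_closure:
  assumes "E \<in> \<X>"
  shows "act g ` E \<in> \<X>"
proof -
  have "\<exists>y\<in>Y. hausdorff_dist (act g ` E) (fibre y) < r" if "r > 0" for r
  proof -
    obtain d where "d > 0" and d: "\<And>A B. A \<in> hyperspace X \<Longrightarrow> B \<in> hyperspace X \<Longrightarrow>
        hausdorff_dist A B < d \<Longrightarrow> hausdorff_dist (act g ` A) (act g ` B) < r"
      using hausdorff_dist_image_less[OF compact_X continuous_on_act \<open>r > 0\<close>] by blast
    then obtain y where "y \<in> Y" "hausdorff_dist E (fibre y) < d"
      using assms unfolding fibre_closure_iff by blast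
    then have "hausdorff_dist (act g ` E) (fibre (actY g y)) < r"
      using d[of E "fibre y"] assms fibre_closure_subset_hyperspace fibre_in_hyperspace
        image_act_fibre by auto
    then show ?thesis using actY_in_Y[OF \<open>y \<in> Y\<close>] by blast
  qed
  then show ?thesis
    using act_image_in_hyperspace assms fibre_closure_subset_hyperspace unfolding fibre_closure_iff by blast
qed

lemma pi_X_act:
  assumes "E \<in> \<X>"
  shows "pi_X p (act g ` E) = actY g (pi_X p E)"
proof -
  obtain x where "x \<in> E" using fibre_closureD(2)[OF assms] by blast
  then have "pi_X p (act g ` E) = p (act g x)"
    using pi_X_eq[OF act_image_in_fibre_closure[OF assms]] by blast
  also have "\<dots> = actY g (pi_X p E)"
    using equivariant fibre_closureD(3)[OF assms] pi_X_eq[OF assms] \<open>x \<in> E\<close> by auto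
  finally show ?thesis .
qed

lemma measure_actY_image:
  assumes "A \<in> sets \<nu>" "A \<subseteq> Y"
  shows "measure \<nu> (actY g ` A) = measure \<nu> A"
proof -
  have "actY g ` A = actY (- g) -` A \<inter> Y"
  proof (intro equalityI subsetI)
    fix z assume "z \<in> actY g ` A"
    then show "z \<in> actY (- g) -` A \<inter> Y"
      using assms(2) actY_in_Y tds_act_inverse[OF tds_Y] by auto
  next
    fix z assume z: "z \<in> actY (- g) -` A \<inter> Y"
    then have "z = actY g (actY (- g) z)" using tds_act_inverse[OF tds_Y, of z "- g"] by simp
    moreover have "actY (- g) z \<in> A" using z by blast
    ultimately show "z \<in> actY g ` A" by (rule image_eqI)
  qed
  then show ?thesis using measure_preserving[OF assms(1), of "- g"] by (simp add: measure_def)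
qed

lemma act_image_in_fibre_meas:
  assumes "E \<in> \<X>\<^sub>m"
  shows "act g ` E \<in> \<X>\<^sub>m"
proof -
  have E: "E \<in> \<X>" using assms fibre_meas_subset_fibre_closure by blast
  have "measure \<nu> (pi_X p ` F.mball (act g ` E) e) > 0" if "e > 0" for e
  proof -
    obtain d where "d > 0" and d: "\<And>A B. A \<in> hyperspace X \<Longrightarrow> B \<in> hyperspace X \<Longrightarrow>
        hausdorff_dist A B < d \<Longrightarrow> hausdorff_dist (act g ` A) (act g ` B) < e"
      using hausdorff_dist_image_less[OF compact_X continuous_on_act \<open>e > 0\<close>] by blast
    define A where "A = pi_X p ` F.mball E d"
    have "actY g ` A \<subseteq> pi_X p ` F.mball (act g ` E) e"
    proof
      fix c assume "c \<in> actY g ` A"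
      then obtain E' where E': "E' \<in> F.mball E d" "c = actY g (pi_X p E')" unfolding A_def by blast
      then have "act g ` E' \<in> F.mball (act g ` E) e"
        using d[of E E'] E act_image_in_fibre_closure fibre_closure_subset_hyperspace by auto
      moreover have "c = pi_X p (act g ` E')" using E' pi_X_act by simp
      ultimately show "c \<in> pi_X p ` F.mball (act g ` E) e" by blast
    qed
    then have "measure \<nu> (actY g ` A) \<le> measure \<nu> (pi_X p ` F.mball (act g ` E) e)"
      by (intro finite_measure.finite_measure_mono[OF finite_measure_\<nu>] sets_pi_X_mball)
    moreover have "measure \<nu> (actY g ` A) = measure \<nu> A"
      unfolding A_def using sets_pi_X_mball pi_X_image_subset
      by (intro measure_actY_image) auto
    moreover have "measure \<nu> A > 0" using assms \<open>d > 0\<close> unfolding A_def fibre_meas_def by blast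
    ultimately show ?thesis by linarith
  qed
  then show ?thesis using act_image_in_fibre_closure[OF E] unfolding fibre_meas_def by blast
qed

lemma act_image_in_V:
  assumes "F \<in> \<V>"
  shows "act g ` F \<in> \<V>"
proof -
  have F: "F \<in> hyperspace X" "Vset X p Y \<nu> F = p ` F" using assms by simp_all
  have "p ` act g ` F \<subseteq> Vset X p Y \<nu> (act g ` F)"
  proof
    fix z assume "z \<in> p ` act g ` F"
    then obtain x where x: "x \<in> F" "z = p (act g x)" by blast
    then have "p x \<in> Vset X p Y \<nu> F" using F(2) by simp
    then obtain E where E: "E \<in> \<X>\<^sub>m" "E \<subseteq> F" "pi_X p E = p x" unfolding Vset_def by blast
    have "x \<in> X" using x(1) hyperspaceD(3)[OF compact_X F(1)] by blast
    have "E \<in> \<X>" using E(1) fibre_meas_subset_fibre_closure by blast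
    have "act g ` E \<in> \<X>\<^sub>m" by (rule act_image_in_fibre_meas[OF E(1)])
    moreover have "act g ` E \<subseteq> act g ` F" using E(2) by (rule image_mono)
    moreover have "pi_X p (act g ` E) = z"
      using pi_X_act[OF \<open>E \<in> \<X>\<close>] E(3) x(2) equivariant[OF \<open>x \<in> X\<close>] by simp
    moreover have "z \<in> Y" using x(2) act_in_X[OF \<open>x \<in> X\<close>] image_p by blast
    ultimately show "z \<in> Vset X p Y \<nu> (act g ` F)" unfolding Vset_def by blast
  qed
  then have "Vset X p Y \<nu> (act g ` F) = p ` act g ` F"
    using Vset_subset_image by (intro equalityI)
  with act_image_in_hyperspace[OF F(1)] show ?thesis by simp
qed

end

theorem lemma3p7:
  fixes X :: "'a::metric_space set" and act :: "'g::group_add \<Rightarrow> 'a \<Rightarrow> 'a"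
    and Y :: "'b::metric_space set" and actY :: "'g \<Rightarrow> 'b \<Rightarrow> 'b"
    and p :: "'a \<Rightarrow> 'b" and \<nu> :: "'b measure"
  assumes "countable (UNIV :: 'g set)" and "infinite (UNIV :: 'g set)"
    and "minimal_tds X act"
    and "max_eq_factor X act Y actY p"
    and "invariant_prob Y actY \<nu>"
    and "\<forall>\<mu>. invariant_prob Y actY \<mu> \<longrightarrow> \<mu> = \<nu>"
  defines "\<V> \<equiv> {F \<in> hyperspace X. Vset X p Y \<nu> F = p ` F}"
  shows "compactin (hyper_top X) \<V> \<and> (\<forall>g. \<forall>F\<in>\<V>. act g ` F \<in> \<V>)"
proof -
  have tds: "tds X act" "tds Y actY" and factor: "factor_map X act Y actY p"
    using assms(3,4) unfolding minimal_tds_def max_eq_factor_def by blast+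
  have \<nu>: "prob_space \<nu>" "sets \<nu> = sets (restrict_space borel Y)"
    "\<And>g A. A \<in> sets \<nu> \<Longrightarrow> emeasure \<nu> (actY g -` A \<inter> Y) = emeasure \<nu> A"
    using assms(5) unfolding invariant_prob_def by blast+
  have "factor_fibres X p Y \<nu>"
  proof (rule factor_fibres.intro)
    show "compact X" using tds(1) unfolding tds_def by blast
    show "continuous_on X p" "p ` X = Y" using factor unfolding factor_map_def by blast+
    show "finite_measure \<nu>" using \<nu>(1) by (simp add: prob_space_def)
  qed (rule \<nu>(2))
  moreover have "equivariant_factor_fibres_axioms X p Y \<nu> act actY"
    using tds factor \<nu>(3) unfolding factor_map_def by unfold_locales blast+
  ultimately interpret equivariant_factor_fibres X p Y \<nu> act actY
    by (rule equivariant_factor_fibres.intro)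
  show ?thesis
    unfolding \<V>_def using compactin_V act_image_in_V by blast
qed

end
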